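(* Let $N_1(I_1,O_1,r_1)$ and $N_2(I_2,O_2,r_2)$ be negators. Form the $(2,2,1)$-pole $M=\operatorname{NN}(N_1,N_2)$ by performing the junction of the connectors $O_1$ and $I_2$, and adding one new vertex $v$ incident with the semiedges $r_1$, $r_2$ (i.e. the dangling edges of $r_1$ and $r_2$ are joined to $v$) and with one new dangling edge whose free end is the semiedge $r_3$; the connectors of $M$ are $I_1=\{i,i'\}$, $O_2=\{o,o'\}$ and $\{r_3\}$. Then for every colouring $\varphi$ of $M$ we have $\varphi(i)\ne\varphi(i')$, $\varphi(o)\ne\varphi(o')$ and $\varphi(i)+\varphi(i')+\varphi(o)+\varphi(o')+\varphi(r_3)=0$. Moreover, if $N_1$ and $N_2$ are both perfect, then for every $5$-tuple $(a,b,c,d,e)\in\mathbb{K}^5$ with $a\ne b$, $c\ne d$ and $a+b+c+d+e=0$ there is a colouring $\varphi$ of $M$ with $(\varphi(i),\varphi(i'),\varphi(o),\varphi(o'),\varphi(r_3))=(a,b,c,d,e)$.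
   Context: A multipole consists of vertices and edges; each edge has two ends, each either incident with a vertex or free; a free end is a semiedge. A dangling edge has exactly one end at a vertex, an isolated edge has none. All multipoles are cubic (every vertex is incident with exactly three edge ends; loops and parallel edges allowed). The semiedges are partitioned into connectors; a $(c_1,\dots,c_n)$-pole has $n$ connectors of sizes $c_1,\dots,c_n$. The junction of two semiedges identifies the two free ends into a single edge; the junction of two connectors of equal size performs junctions of their semiedges along a bijection (arbitrary unless stated). Let $\mathbb{K}=\{(0,1),(1,0),(1,1)\}\subset\mathbb{Z}_2\times\mathbb{Z}_2$. A colouring of a multipole is an assignment of elements of $\mathbb{K}$ to its edges such that at each vertex the three incident edge ends receive distinct colours (equivalently, they sum to $0$). A snark is a connected cubic graph with no such colouring. Negator: let $G$ be a snark and $uwv$ a path of length two in $G$; $\operatorname{Neg}(G;u,v)$ is the $(2,2,1)$-pole $N(I,O,r)$ obtained by deleting $u,w,v$, where $I$ consists of the two semiedges formerly incident with $u$, $O$ of the two semiedges formerly incident with $v$, and $r$ is the semiedge formerly incident with $w$. A negator $N(\{i_1,i_2\},\{o_1,o_2\},r)$ is perfect if the set of tuples $(\varphi(i_1),\varphi(i_2),\varphi(o_1),\varphi(o_2),\varphi(r))$ over all colourings $\varphi$ of $N$ equals $\{(x,x,a,b,a+b),(a,b,x,x,a+b): x,a,b\in\mathbb{K},\ a\ne b\}$. *)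

theory Defs
  imports Main "HOL-Library.Z2" "HOL-Library.Product_Plus"
begin

type_synonym colour = "bit \<times> bit"

definition KK :: "colour set" where
  "KK = {(0,1), (1,0), (1,1)}"

text \<open>A multipole: vertices, edge ends ('h), edges ('e); every end belongs to an edge
  (edge_of) and is either attached to a vertex (att h = Some v) or free (att h = None,
  a semiedge).\<close>

record ('v, 'h, 'e) multipole =
  verts :: "'v set"
  hends :: "'h set"
  edges :: "'e set"
  edge_of :: "'h \<Rightarrow> 'e"
  att :: "'h \<Rightarrow> 'v option"

definition ends_at :: "('v, 'h, 'e) multipole \<Rightarrow> 'v \<Rightarrow> 'h set" where
  "ends_at M x = {h \<in> hends M. att M h = Some x}"

definition semiedges :: "('v, 'h, 'e) multipole \<Rightarrow> 'h set" where
  "semiedges M = {h \<in> hends M. att M h = None}"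

definition cubic_multipole :: "('v, 'h, 'e) multipole \<Rightarrow> bool" where
  "cubic_multipole M \<longleftrightarrow>
     finite (verts M) \<and> finite (hends M) \<and> finite (edges M) \<and>
     (\<forall>h \<in> hends M. edge_of M h \<in> edges M) \<and>
     (\<forall>e \<in> edges M. card {h \<in> hends M. edge_of M h = e} = 2) \<and>
     (\<forall>h \<in> hends M. \<forall>x. att M h = Some x \<longrightarrow> x \<in> verts M) \<and>
     (\<forall>x \<in> verts M. card (ends_at M x) = 3)"

definition colouring :: "('v, 'h, 'e) multipole \<Rightarrow> ('e \<Rightarrow> colour) \<Rightarrow> bool" where
  "colouring M \<phi> \<longleftrightarrow>
     (\<forall>e \<in> edges M. \<phi> e \<in> KK) \<and>
     (\<forall>x \<in> verts M. \<forall>h1 \<in> ends_at M x. \<forall>h2 \<in> ends_at M x.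
        h1 \<noteq> h2 \<longrightarrow> \<phi> (edge_of M h1) \<noteq> \<phi> (edge_of M h2))"

definition adjacent :: "('v, 'h, 'e) multipole \<Rightarrow> 'v \<Rightarrow> 'v \<Rightarrow> bool" where
  "adjacent M x y \<longleftrightarrow> (\<exists>h1 \<in> hends M. \<exists>h2 \<in> hends M. h1 \<noteq> h2 \<and>
      edge_of M h1 = edge_of M h2 \<and> att M h1 = Some x \<and> att M h2 = Some y)"

definition connected_mp :: "('v, 'h, 'e) multipole \<Rightarrow> bool" where
  "connected_mp M \<longleftrightarrow> verts M \<noteq> {} \<and>
     (\<forall>x \<in> verts M. \<forall>y \<in> verts M. (x, y) \<in> {(a, b). adjacent M a b}\<^sup>*)"

definition snark :: "('v, 'h, 'e) multipole \<Rightarrow> bool" where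
  "snark G \<longleftrightarrow> cubic_multipole G \<and> semiedges G = {} \<and> connected_mp G \<and>
     \<not> (\<exists>\<phi>. colouring G \<phi>)"

definition joins :: "('v, 'h, 'e) multipole \<Rightarrow> 'e \<Rightarrow> 'v \<Rightarrow> 'v \<Rightarrow> bool" where
  "joins G e x y \<longleftrightarrow> e \<in> edges G \<and> (\<exists>h1 \<in> hends G. \<exists>h2 \<in> hends G. h1 \<noteq> h2 \<and>
      edge_of G h1 = e \<and> edge_of G h2 = e \<and> att G h1 = Some x \<and> att G h2 = Some y)"

definition path2 :: "('v, 'h, 'e) multipole \<Rightarrow> 'v \<Rightarrow> 'v \<Rightarrow> 'v \<Rightarrow> 'e \<Rightarrow> 'e \<Rightarrow> bool" where
  "path2 G u w v e1 e2 \<longleftrightarrow> u \<in> verts G \<and> w \<in> verts G \<and> v \<in> verts G \<and>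
     u \<noteq> w \<and> w \<noteq> v \<and> u \<noteq> v \<and> e1 \<noteq> e2 \<and> joins G e1 u w \<and> joins G e2 w v"

definition Neg :: "('v, 'h, 'e) multipole \<Rightarrow> 'v \<Rightarrow> 'v \<Rightarrow> 'v \<Rightarrow> 'e \<Rightarrow> 'e \<Rightarrow> ('v, 'h, 'e) multipole" where
  "Neg G u w v e1 e2 =
     \<lparr> verts = verts G - {u, w, v},
       hends = {h \<in> hends G. edge_of G h \<notin> {e1, e2}},
       edges = edges G - {e1, e2},
       edge_of = edge_of G,
       att = (\<lambda>h. if att G h \<in> {Some u, Some w, Some v} then None else att G h) \<rparr>"

definition neg_ports :: "('v, 'h, 'e) multipole \<Rightarrow> 'v \<Rightarrow> 'v \<Rightarrow> 'v \<Rightarrow> 'e \<Rightarrow> 'e \<Rightarrow>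
     'h \<Rightarrow> 'h \<Rightarrow> 'h \<Rightarrow> 'h \<Rightarrow> 'h \<Rightarrow> bool" where
  "neg_ports G u w v e1 e2 i1 i2 o1 o2 r \<longleftrightarrow>
     i1 \<noteq> i2 \<and> o1 \<noteq> o2 \<and>
     {h \<in> hends G. edge_of G h \<notin> {e1, e2} \<and> att G h = Some u} = {i1, i2} \<and>
     {h \<in> hends G. edge_of G h \<notin> {e1, e2} \<and> att G h = Some v} = {o1, o2} \<and>
     {h \<in> hends G. edge_of G h \<notin> {e1, e2} \<and> att G h = Some w} = {r}"

definition perfect_neg :: "('v, 'h, 'e) multipole \<Rightarrow> 'h \<Rightarrow> 'h \<Rightarrow> 'h \<Rightarrow> 'h \<Rightarrow> 'h \<Rightarrow> bool" where
  "perfect_neg N i1 i2 o1 o2 r \<longleftrightarrow>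
     {(\<phi> (edge_of N i1), \<phi> (edge_of N i2), \<phi> (edge_of N o1), \<phi> (edge_of N o2), \<phi> (edge_of N r))
       | \<phi>. colouring N \<phi>}
     = {(x, x, a, b, a + b) | x a b. x \<in> KK \<and> a \<in> KK \<and> b \<in> KK \<and> a \<noteq> b}
       \<union> {(a, b, x, x, a + b) | x a b. x \<in> KK \<and> a \<in> KK \<and> b \<in> KK \<and> a \<noteq> b}"

text \<open>Ends of NN(N1,N2): ends of N1 (Inl), ends of N2 (Inr (Inl _)), and the two ends of
  the new dangling edge: Inr (Inr True) at the new vertex, Inr (Inr False) the free end r3.
  Vertices: Some (Inl _), Some (Inr _) and the new vertex None.
  Edges: the old edges of N1, N2 and the new edge Inr (Inr ()), where the edges carrying
  o1 and i1' (resp. o2 and i2') are identified by the junction; an edge of NN is an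
  equivalence class of old edges under the equivalence generated by these identifications.\<close>

definition nn_old_edge :: "('v1, 'h1, 'e1) multipole \<Rightarrow> ('v2, 'h2, 'e2) multipole \<Rightarrow>
     'h1 + 'h2 + bool \<Rightarrow> 'e1 + 'e2 + unit" where
  "nn_old_edge N1 N2 h = (case h of
       Inl h1 \<Rightarrow> Inl (edge_of N1 h1)
     | Inr (Inl h2) \<Rightarrow> Inr (Inl (edge_of N2 h2))
     | Inr (Inr b) \<Rightarrow> Inr (Inr ()))"

definition nn_cls :: "('v1, 'h1, 'e1) multipole \<Rightarrow> 'h1 \<Rightarrow> 'h1 \<Rightarrow>
     ('v2, 'h2, 'e2) multipole \<Rightarrow> 'h2 \<Rightarrow> 'h2 \<Rightarrow> 'e1 + 'e2 + unit \<Rightarrow> ('e1 + 'e2 + unit) set" where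
  "nn_cls N1 o1 o2 N2 j1 j2 x =
     (let R = {(Inl (edge_of N1 o1), Inr (Inl (edge_of N2 j1))),
               (Inl (edge_of N1 o2), Inr (Inl (edge_of N2 j2)))}
      in (R \<union> R\<inverse>)\<^sup>* `` {x})"

definition NN :: "('v1, 'h1, 'e1) multipole \<Rightarrow> 'h1 \<Rightarrow> 'h1 \<Rightarrow> 'h1 \<Rightarrow>
     ('v2, 'h2, 'e2) multipole \<Rightarrow> 'h2 \<Rightarrow> 'h2 \<Rightarrow> 'h2 \<Rightarrow>
     (('v1 + 'v2) option, 'h1 + 'h2 + bool, ('e1 + 'e2 + unit) set) multipole" where
  "NN N1 o1 o2 r1 N2 j1 j2 r2 =
     \<lparr> verts = Some ` (Inl ` verts N1 \<union> Inr ` verts N2) \<union> {None},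
       hends = Inl ` (hends N1 - {o1, o2}) \<union> Inr ` Inl ` (hends N2 - {j1, j2})
               \<union> {Inr (Inr True), Inr (Inr False)},
       edges = nn_cls N1 o1 o2 N2 j1 j2 `
               (Inl ` edges N1 \<union> Inr ` Inl ` edges N2 \<union> {Inr (Inr ())}),
       edge_of = (\<lambda>h. nn_cls N1 o1 o2 N2 j1 j2 (nn_old_edge N1 N2 h)),
       att = (\<lambda>h. case h of
                  Inl h1 \<Rightarrow> (if h1 = r1 then Some None else map_option (\<lambda>x. Some (Inl x)) (att N1 h1))
                | Inr (Inl h2) \<Rightarrow> (if h2 = r2 then Some None else map_option (\<lambda>x. Some (Inr x)) (att N2 h2))
                | Inr (Inr b) \<Rightarrow> (if b then Some None else None)) \<rparr>"

end

(*
  By the parity lemma, the five boundary colours of every colouring of a negator sum to 0.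
  In Neg(G; u, v) the two input colours or the two output colours must coincide: otherwise
  colouring uw by the sum of the inputs and wv by the sum of the outputs would colour the
  snark G. In NN(N1, N2) the outputs of N1 are the inputs of N2. If that middle pair were
  distinct, the inputs of N1 and the outputs of N2 would both be equal pairs, so r1 and r2
  would receive the same colour at the new vertex. Hence the middle pair is equal, r1 and r2
  carry the sums of the outer pairs, and the new vertex gives the claimed relation.
  Conversely, for perfect negators a colouring of NN(N1, N2) with prescribed outer colours is
  glued from colourings of N1 and N2 that agree on a constant middle pair.
*)

theory Submission
  imports Defs
begin

section \<open>Arithmetic of colours\<close>

lemma colour_add_self [simp]: "(c::colour) + c = 0"
  by (cases c) (simp add: zero_prod_def)

lemma colour_add_eq_0_iff: "(a::colour) + b = 0 \<longleftrightarrow> a = b"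
  by (metis add.assoc add_0_left add_0_right colour_add_self)

lemma zero_notin_KK: "0 \<notin> KK"
  by (auto simp: KK_def zero_prod_def)

lemma KK_sum3_eq_0_iff:
  assumes "a \<in> KK" "b \<in> KK" "c \<in> KK"
  shows "a + b + c = 0 \<longleftrightarrow> distinct [a, b, c]"
  using assms by (auto simp: KK_def zero_prod_def)

lemma KK_add:
  assumes "a \<in> KK" "b \<in> KK" "a \<noteq> b"
  shows "a + b \<in> KK" "distinct [a + b, a, b]"
  using assms by (auto simp: KK_def zero_prod_def)

lemma negator_chain_colours:
  fixes a a' b b' d d' r1 r2 e :: colour
  assumes sum1: "a + a' + b + b' + r1 = 0" and sum2: "b + b' + d + d' + r2 = 0"
    and neg1: "a = a' \<or> b = b'" and neg2: "b = b' \<or> d = d'"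
    and KK: "r1 \<in> KK" "r2 \<in> KK" "e \<in> KK" and distinct: "distinct [r1, r2, e]"
  shows "a \<noteq> a' \<and> d \<noteq> d' \<and> a + a' + d + d' + e = 0"
proof -
  have r1: "r1 = a + a' + b + b'" and r2: "r2 = b + b' + d + d'"
    using sum1 sum2 by (simp_all add: colour_add_eq_0_iff)
  have "b = b'"
  proof (rule ccontr)
    assume "b \<noteq> b'"
    then have "r1 = b + b'" "r2 = b + b'"
      using r1 r2 neg1 neg2 by (simp_all add: add.assoc)
    with distinct show False by simp
  qed
  then have "r1 = a + a'" "r2 = d + d'"
    using r1 r2 by (simp_all add: add.assoc)
  moreover have "r1 + r2 + e = 0"
    using KK distinct by (simp add: KK_sum3_eq_0_iff)
  ultimately show ?thesis
    using KK zero_notin_KK by (auto simp: add.assoc)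
qed

section \<open>The parity lemma\<close>

lemma colouring_edge_of_in_KK:
  assumes "cubic_multipole N" "colouring N \<phi>" "h \<in> hends N"
  shows "\<phi> (edge_of N h) \<in> KK"
  using assms by (simp add: cubic_multipole_def colouring_def)

lemma sum_over_ends_eq_0:
  fixes \<phi> :: "'e \<Rightarrow> colour"
  assumes "cubic_multipole N"
  shows "(\<Sum>h\<in>hends N. \<phi> (edge_of N h)) = 0"
proof -
  have "(\<Sum>h\<in>hends N. \<phi> (edge_of N h))
      = (\<Sum>e\<in>edges N. \<Sum>h\<in>{h \<in> hends N. edge_of N h = e}. \<phi> (edge_of N h))"
    using assms by (intro sum.group[symmetric]) (auto simp: cubic_multipole_def)
  also have "\<dots> = 0"
  proof (rule sum.neutral, rule ballI)
    fix e assume "e \<in> edges N"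
    then obtain h h' where "{h \<in> hends N. edge_of N h = e} = {h, h'}" "h \<noteq> h'"
      using assms by (auto simp: cubic_multipole_def card_2_iff)
    moreover from calculation have "edge_of N h = e" "edge_of N h' = e" by auto
    ultimately show "(\<Sum>g\<in>{g \<in> hends N. edge_of N g = e}. \<phi> (edge_of N g)) = 0" by simp
  qed
  finally show ?thesis .
qed

lemma colouring_sum_over_attached_ends_eq_0:
  assumes "cubic_multipole N" "colouring N \<phi>"
  shows "(\<Sum>h\<in>hends N - semiedges N. \<phi> (edge_of N h)) = 0"
proof -
  have fin: "finite (verts N)" "finite (hends N)"
    using assms(1) by (auto simp: cubic_multipole_def)
  have "hends N - semiedges N = (\<Union>x\<in>verts N. ends_at N x)"
  proof
    show "hends N - semiedges N \<subseteq> (\<Union>x\<in>verts N. ends_at N x)"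
    proof
      fix h assume "h \<in> hends N - semiedges N"
      then obtain x where "h \<in> hends N" "att N h = Some x"
        by (auto simp: semiedges_def)
      moreover from calculation have "x \<in> verts N"
        using assms(1) by (auto simp: cubic_multipole_def)
      ultimately show "h \<in> (\<Union>x\<in>verts N. ends_at N x)"
        by (auto simp: ends_at_def)
    qed
  qed (auto simp: semiedges_def ends_at_def)
  then have "(\<Sum>h\<in>hends N - semiedges N. \<phi> (edge_of N h))
      = (\<Sum>h\<in>(\<Union>x\<in>verts N. ends_at N x). \<phi> (edge_of N h))"
    by simp
  also have "\<dots> = (\<Sum>x\<in>verts N. \<Sum>h\<in>ends_at N x. \<phi> (edge_of N h))"
    by (rule sum.UNION_disjoint) (use fin in \<open>auto simp: ends_at_def\<close>)
  also have "\<dots> = 0"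
  proof (rule sum.neutral, rule ballI)
    fix x assume x: "x \<in> verts N"
    then obtain h1 h2 h3 where ends: "ends_at N x = {h1, h2, h3}" "distinct [h1, h2, h3]"
      using assms(1) by (auto simp: cubic_multipole_def card_3_iff)
    then have "distinct [\<phi> (edge_of N h1), \<phi> (edge_of N h2), \<phi> (edge_of N h3)]"
      using assms(2) x by (auto simp: colouring_def)
    moreover have "\<phi> (edge_of N h) \<in> KK" if "h \<in> ends_at N x" for h
      using colouring_edge_of_in_KK[OF assms] that by (simp add: ends_at_def)
    ultimately have "\<phi> (edge_of N h1) + \<phi> (edge_of N h2) + \<phi> (edge_of N h3) = 0"
      using ends(1) by (simp add: KK_sum3_eq_0_iff)
    then show "(\<Sum>h\<in>ends_at N x. \<phi> (edge_of N h)) = 0"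
      using ends by (simp add: add.assoc)
  qed
  finally show ?thesis .
qed

lemma colouring_sum_over_semiedges_eq_0:
  assumes "cubic_multipole N" "colouring N \<phi>"
  shows "(\<Sum>h\<in>semiedges N. \<phi> (edge_of N h)) = 0"
proof -
  have "semiedges N \<subseteq> hends N" "finite (hends N)"
    using assms(1) by (auto simp: cubic_multipole_def semiedges_def)
  then have "(\<Sum>h\<in>hends N. \<phi> (edge_of N h))
      = (\<Sum>h\<in>hends N - semiedges N. \<phi> (edge_of N h)) + (\<Sum>h\<in>semiedges N. \<phi> (edge_of N h))"
    by (rule sum.subset_diff)
  then show ?thesis
    using sum_over_ends_eq_0[OF assms(1), of \<phi>] colouring_sum_over_attached_ends_eq_0[OF assms]
    by simp
qed

section \<open>Negators from snarks\<close>

definition boundary_colourings :: "('v, 'h, 'e) multipole \<Rightarrow> 'h \<Rightarrow> 'h \<Rightarrow> 'h \<Rightarrow> 'h \<Rightarrow> 'h \<Rightarrow>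
    (colour \<times> colour \<times> colour \<times> colour \<times> colour) set" where
  "boundary_colourings N i1 i2 o1 o2 r =
     {(\<phi> (edge_of N i1), \<phi> (edge_of N i2), \<phi> (edge_of N o1), \<phi> (edge_of N o2), \<phi> (edge_of N r))
       | \<phi>. colouring N \<phi>}"

definition negator_tuples :: "(colour \<times> colour \<times> colour \<times> colour \<times> colour) set" where
  "negator_tuples = {(x, x', y, y', z). (x = x' \<or> y = y') \<and> x + x' + y + y' + z = 0}"

lemma perfect_neg_iff_boundary_colourings:
  "perfect_neg N i1 i2 o1 o2 r \<longleftrightarrow> boundary_colourings N i1 i2 o1 o2 r =
     {(x, x, a, b, a + b) | x a b. x \<in> KK \<and> a \<in> KK \<and> b \<in> KK \<and> a \<noteq> b}
     \<union> {(a, b, x, x, a + b) | x a b. x \<in> KK \<and> a \<in> KK \<and> b \<in> KK \<and> a \<noteq> b}"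
  by (simp add: perfect_neg_def boundary_colourings_def)

lemma joins_ends:
  assumes "cubic_multipole G" "joins G e x y"
  obtains h h' where "{g \<in> hends G. edge_of G g = e} = {h, h'}"
    "att G h = Some x" "att G h' = Some y"
proof -
  from assms(2) obtain h h' where h: "e \<in> edges G" "h \<in> hends G" "h' \<in> hends G" "h \<noteq> h'"
      "edge_of G h = e" "edge_of G h' = e" "att G h = Some x" "att G h' = Some y"
    unfolding joins_def by blast
  have "{h, h'} = {g \<in> hends G. edge_of G g = e}"
    using assms(1) h by (intro card_subset_eq) (auto simp: cubic_multipole_def)
  then show thesis
    by (rule that[OF sym h(7,8)])
qed

lemma edge_of_ends_off_path:
  assumes "cubic_multipole G" "path2 G u w v e1 e2" "h \<in> ends_at G x" "x \<notin> {u, w, v}"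
  shows "edge_of G h \<notin> {e1, e2}"
proof -
  obtain a a' where e1: "{g \<in> hends G. edge_of G g = e1} = {a, a'}"
    and "att G a = Some u" "att G a' = Some w"
    using joins_ends[OF assms(1)] assms(2) unfolding path2_def by metis
  moreover obtain b b' where e2: "{g \<in> hends G. edge_of G g = e2} = {b, b'}"
    and "att G b = Some w" "att G b' = Some v"
    using joins_ends[OF assms(1)] assms(2) unfolding path2_def by metis
  moreover have "h \<in> hends G" "att G h = Some x"
    using assms(3) by (auto simp: ends_at_def)
  ultimately have "h \<notin> {a, a', b, b'}"
    using assms(4) by auto
  with \<open>h \<in> hends G\<close> show ?thesis
    using e1 e2 by blast
qed

lemma ends_at_Neg:
  assumes "cubic_multipole G" "path2 G u w v e1 e2" "x \<notin> {u, w, v}"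
  shows "ends_at (Neg G u w v e1 e2) x = ends_at G x"
  using edge_of_ends_off_path[OF assms(1,2) _ assms(3)] assms(3)
  by (auto simp: Neg_def ends_at_def)

lemma cubic_Neg:
  assumes "cubic_multipole G" "path2 G u w v e1 e2"
  shows "cubic_multipole (Neg G u w v e1 e2)"
proof -
  have "{h \<in> hends (Neg G u w v e1 e2). edge_of G h = e} = {h \<in> hends G. edge_of G h = e}"
    if "e \<notin> {e1, e2}" for e
    using that by (auto simp: Neg_def)
  moreover have "x \<in> verts G" if "h \<in> hends G" "att G h = Some x" for h x
    using assms(1) that by (auto simp: cubic_multipole_def)
  ultimately show ?thesis
    using assms(1) ends_at_Neg[OF assms]
    by (auto simp: cubic_multipole_def Neg_def)
qed

lemma distinct_values_on_three:
  assumes "S = {p, q, s}" "distinct [f p, f q, f s]" "h \<in> S" "h' \<in> S" "h \<noteq> h'"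
  shows "f h \<noteq> f h'"
  using assms by auto

locale neg_construction =
  fixes G :: "('v, 'h, 'e) multipole" and u w v :: 'v and e1 e2 :: 'e and i1 i2 o1 o2 r :: 'h
  assumes cubic: "cubic_multipole G" and no_semiedges: "semiedges G = {}"
    and path: "path2 G u w v e1 e2" and ports: "neg_ports G u w v e1 e2 i1 i2 o1 o2 r"
begin

abbreviation N :: "('v, 'h, 'e) multipole" where
  "N \<equiv> Neg G u w v e1 e2"

lemma edge_of_N [simp]: "edge_of N = edge_of G"
  by (simp add: Neg_def)

lemma cubic_N: "cubic_multipole N"
  using cubic path by (rule cubic_Neg)

lemma port_sets:
  "{h \<in> hends G. edge_of G h \<notin> {e1, e2} \<and> att G h = Some u} = {i1, i2}"
  "{h \<in> hends G. edge_of G h \<notin> {e1, e2} \<and> att G h = Some v} = {o1, o2}"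
  "{h \<in> hends G. edge_of G h \<notin> {e1, e2} \<and> att G h = Some w} = {r}"
  using ports by (simp_all add: neg_ports_def)

lemma ports_attached:
  "att G i1 = Some u" "att G i2 = Some u" "att G o1 = Some v" "att G o2 = Some v" "att G r = Some w"
  using ports by (auto simp: neg_ports_def set_eq_iff)

lemma ports_off_path:
  assumes "p \<in> {i1, i2, o1, o2, r}"
  shows "edge_of G p \<noteq> e1" "edge_of G p \<noteq> e2"
  using ports assms by (auto simp: neg_ports_def set_eq_iff)

lemma ports_distinct: "distinct [i1, i2, o1, o2, r]"
  using ports path ports_attached by (auto simp: neg_ports_def path2_def)

lemma semiedges_N: "semiedges N = {i1, i2, o1, o2, r}"
proof -
  have "semiedges N = {h \<in> hends G. edge_of G h \<notin> {e1, e2} \<and> att G h \<in> {Some u, Some w, Some v}}"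
    using no_semiedges by (auto simp: Neg_def semiedges_def)
  also have "\<dots> = {i1, i2, o1, o2, r}"
    using ports unfolding neg_ports_def by blast
  finally show ?thesis .
qed

lemma ends_at_path_vertices:
  obtains a1 a2 b1 b2 where
    "edge_of G a1 = e1" "edge_of G a2 = e1" "edge_of G b1 = e2" "edge_of G b2 = e2"
    "ends_at G u = {a1, i1, i2}" "ends_at G w = {a2, b1, r}" "ends_at G v = {b2, o1, o2}"
proof -
  obtain a1 a2 where a: "{g \<in> hends G. edge_of G g = e1} = {a1, a2}"
    "att G a1 = Some u" "att G a2 = Some w"
    using joins_ends[OF cubic] path unfolding path2_def by metis
  obtain b1 b2 where b: "{g \<in> hends G. edge_of G g = e2} = {b1, b2}"
    "att G b1 = Some w" "att G b2 = Some v"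
    using joins_ends[OF cubic] path unfolding path2_def by metis
  have split: "ends_at G x = {h \<in> {a1, a2, b1, b2}. att G h = Some x}
      \<union> {h \<in> hends G. edge_of G h \<notin> {e1, e2} \<and> att G h = Some x}" for x
    using a(1) b(1) by (auto simp: ends_at_def)
  have "u \<noteq> w" "w \<noteq> v" "u \<noteq> v"
    using path by (auto simp: path2_def)
  then have "ends_at G u = {a1, i1, i2}" "ends_at G w = {a2, b1, r}" "ends_at G v = {b2, o1, o2}"
    unfolding split port_sets using a(2,3) b(2,3) by auto
  moreover have "edge_of G a1 = e1" "edge_of G a2 = e1" "edge_of G b1 = e2" "edge_of G b2 = e2"
    using a(1) b(1) by auto
  ultimately show thesis
    using that by blast
qed

lemma colouring_N_parity:
  assumes "colouring N \<phi>"
  shows "\<phi> (edge_of G i1) + \<phi> (edge_of G i2) + \<phi> (edge_of G o1) + \<phi> (edge_of G o2)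
    + \<phi> (edge_of G r) = 0"
  using colouring_sum_over_semiedges_eq_0[OF cubic_N assms]
    sum.distinct_set_conv_list[OF ports_distinct, of "\<lambda>h. \<phi> (edge_of G h)"]
  by (simp add: semiedges_N add.assoc)

lemma path_vertices_properly_coloured:
  assumes at_u: "distinct [A, \<phi> (edge_of G i1), \<phi> (edge_of G i2)]"
    and at_v: "distinct [B, \<phi> (edge_of G o1), \<phi> (edge_of G o2)]"
    and at_w: "distinct [A, B, \<phi> (edge_of G r)]"
    and x: "x \<in> {u, w, v}" and h: "h \<in> ends_at G x" "h' \<in> ends_at G x" "h \<noteq> h'"
  shows "(\<phi>(e1 := A, e2 := B)) (edge_of G h) \<noteq> (\<phi>(e1 := A, e2 := B)) (edge_of G h')"
proof -
  let ?g = "\<lambda>g. (\<phi>(e1 := A, e2 := B)) (edge_of G g)"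
  obtain a1 a2 b1 b2 where path_ends:
    "edge_of G a1 = e1" "edge_of G a2 = e1" "edge_of G b1 = e2" "edge_of G b2 = e2"
    and ends: "ends_at G u = {a1, i1, i2}" "ends_at G w = {a2, b1, r}" "ends_at G v = {b2, o1, o2}"
    by (rule ends_at_path_vertices)
  have "e1 \<noteq> e2"
    using path by (simp add: path2_def)
  then have "?g a1 = A" "?g a2 = A" "?g b1 = B" "?g b2 = B"
    "?g i1 = \<phi> (edge_of G i1)" "?g i2 = \<phi> (edge_of G i2)" "?g o1 = \<phi> (edge_of G o1)"
    "?g o2 = \<phi> (edge_of G o2)" "?g r = \<phi> (edge_of G r)"
    using path_ends by (simp_all add: ports_off_path)
  then have g_u: "distinct [?g a1, ?g i1, ?g i2]" and g_w: "distinct [?g a2, ?g b1, ?g r]"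
    and g_v: "distinct [?g b2, ?g o1, ?g o2]"
    using at_u at_v at_w by simp_all
  from x consider "x = u" | "x = w" | "x = v"
    by blast
  then show ?thesis
  proof cases
    case 1
    then show ?thesis using distinct_values_on_three[OF ends(1) g_u] h by blast
  next
    case 2
    then show ?thesis using distinct_values_on_three[OF ends(2) g_w] h by blast
  next
    case 3
    then show ?thesis using distinct_values_on_three[OF ends(3) g_v] h by blast
  qed
qed

lemma colouring_N_extends:
  assumes col: "colouring N \<phi>" and KK: "A \<in> KK" "B \<in> KK"
    and at_u: "distinct [A, \<phi> (edge_of G i1), \<phi> (edge_of G i2)]"
    and at_v: "distinct [B, \<phi> (edge_of G o1), \<phi> (edge_of G o2)]"
    and at_w: "distinct [A, B, \<phi> (edge_of G r)]"
  shows "colouring G (\<phi>(e1 := A, e2 := B))"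
proof -
  let ?\<psi> = "\<phi>(e1 := A, e2 := B)"
  have "?\<psi> e \<in> KK" if "e \<in> edges G" for e
  proof -
    have "\<phi> e \<in> KK" if "e \<notin> {e1, e2}"
      using col \<open>e \<in> edges G\<close> that unfolding colouring_def by (simp add: Neg_def)
    then show ?thesis
      using KK by auto
  qed
  moreover have "?\<psi> (edge_of G h) \<noteq> ?\<psi> (edge_of G h')"
    if x: "x \<in> verts G" and h: "h \<in> ends_at G x" "h' \<in> ends_at G x" "h \<noteq> h'" for x h h'
  proof (cases "x \<in> {u, w, v}")
    case True
    then show ?thesis
      using path_vertices_properly_coloured[OF at_u at_v at_w _ h] by blast
  next
    case False
    then have "x \<in> verts N" "h \<in> ends_at N x" "h' \<in> ends_at N x"
      using x h ends_at_Neg[OF cubic path] by (auto simp: Neg_def)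
    then have "\<phi> (edge_of G h) \<noteq> \<phi> (edge_of G h')"
      using col \<open>h \<noteq> h'\<close> unfolding colouring_def by (metis edge_of_N)
    moreover have "edge_of G g \<notin> {e1, e2}" if "g \<in> ends_at G x" for g
      using edge_of_ends_off_path[OF cubic path that False] .
    ultimately show ?thesis
      using h by simp
  qed
  ultimately show ?thesis
    unfolding colouring_def by blast
qed

lemma boundary_colourings_N:
  assumes "\<nexists>\<phi>. colouring G \<phi>"
  shows "boundary_colourings N i1 i2 o1 o2 r \<subseteq> negator_tuples"
proof
  fix t assume "t \<in> boundary_colourings N i1 i2 o1 o2 r"
  then obtain \<phi> where col: "colouring N \<phi>"
    and t: "t = (\<phi> (edge_of G i1), \<phi> (edge_of G i2), \<phi> (edge_of G o1), \<phi> (edge_of G o2),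
      \<phi> (edge_of G r))"
    by (auto simp: boundary_colourings_def)
  let ?f = "\<lambda>h. \<phi> (edge_of G h)"
  have parity: "?f i1 + ?f i2 + ?f o1 + ?f o2 + ?f r = 0"
    by (rule colouring_N_parity[OF col])
  have "?f p \<in> KK" if "p \<in> semiedges N" for p
    using colouring_edge_of_in_KK[OF cubic_N col] that by (simp add: semiedges_def)
  then have KK: "?f i1 \<in> KK" "?f i2 \<in> KK" "?f o1 \<in> KK" "?f o2 \<in> KK" "?f r \<in> KK"
    unfolding semiedges_N by simp_all
  have "?f i1 = ?f i2 \<or> ?f o1 = ?f o2"
  proof (rule ccontr)
    assume "\<not> ?thesis"
    then have A: "?f i1 + ?f i2 \<in> KK" "distinct [?f i1 + ?f i2, ?f i1, ?f i2]"
      and B: "?f o1 + ?f o2 \<in> KK" "distinct [?f o1 + ?f o2, ?f o1, ?f o2]"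
      using KK_add[OF KK(1,2)] KK_add[OF KK(3,4)] by simp_all
    have "(?f i1 + ?f i2) + (?f o1 + ?f o2) + ?f r = 0"
      using parity by (simp add: add.assoc)
    then have "distinct [?f i1 + ?f i2, ?f o1 + ?f o2, ?f r]"
      using KK_sum3_eq_0_iff[OF A(1) B(1) KK(5)] by simp
    then have "colouring G (\<phi>(e1 := ?f i1 + ?f i2, e2 := ?f o1 + ?f o2))"
      using colouring_N_extends[OF col A(1) B(1) A(2) B(2)] by blast
    with assms show False by blast
  qed
  with parity show "t \<in> negator_tuples"
    by (simp add: t negator_tuples_def)
qed

end

section \<open>The junction of two negators\<close>

locale nn_junction =
  fixes N1 :: "('v1, 'h1, 'e1) multipole" and o1 o1' r1 :: 'h1
    and N2 :: "('v2, 'h2, 'e2) multipole" and i2 i2' r2 :: 'h2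
  assumes cubic1: "cubic_multipole N1" and ports1: "{o1, o1', r1} \<subseteq> semiedges N1" "r1 \<notin> {o1, o1'}"
    and cubic2: "cubic_multipole N2" and ports2: "{i2, i2', r2} \<subseteq> semiedges N2" "r2 \<notin> {i2, i2'}"
begin

abbreviation M where
  "M \<equiv> NN N1 o1 o1' r1 N2 i2 i2' r2"

abbreviation cls where
  "cls \<equiv> nn_cls N1 o1 o1' N2 i2 i2'"

lemma edge_of_M [simp]:
  "edge_of M (Inl h) = cls (Inl (edge_of N1 h))"
  "edge_of M (Inr (Inl h')) = cls (Inr (Inl (edge_of N2 h')))"
  "edge_of M (Inr (Inr b)) = cls (Inr (Inr ()))"
  by (simp_all add: NN_def nn_old_edge_def)

lemma in_cls_self: "x \<in> cls x"
  by (simp add: nn_cls_def)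

lemma cls_junction:
  "cls (Inl (edge_of N1 o1)) = cls (Inr (Inl (edge_of N2 i2)))"
  "cls (Inl (edge_of N1 o1')) = cls (Inr (Inl (edge_of N2 i2')))"
proof -
  let ?R = "{(Inl (edge_of N1 o1), Inr (Inl (edge_of N2 i2))),
             (Inl (edge_of N1 o1'), Inr (Inl (edge_of N2 i2')))} :: ('e1 + 'e2 + unit) rel"
  have "(?R \<union> ?R\<inverse>)\<^sup>* `` {x} = (?R \<union> ?R\<inverse>)\<^sup>* `` {y}" if "(x, y) \<in> ?R" for x y
    using that converse_rtrancl_into_rtrancl[of x y "?R \<union> ?R\<inverse>"]
      converse_rtrancl_into_rtrancl[of y x "?R \<union> ?R\<inverse>"]
    by blast
  then show "cls (Inl (edge_of N1 o1)) = cls (Inr (Inl (edge_of N2 i2)))"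
    "cls (Inl (edge_of N1 o1')) = cls (Inr (Inl (edge_of N2 i2')))"
    by (simp_all add: nn_cls_def)
qed

lemma constant_on_cls:
  assumes "c (Inl (edge_of N1 o1)) = c (Inr (Inl (edge_of N2 i2)))"
    "c (Inl (edge_of N1 o1')) = c (Inr (Inl (edge_of N2 i2')))"
    and "y \<in> cls x"
  shows "c y = c x"
proof -
  let ?R = "{(Inl (edge_of N1 o1), Inr (Inl (edge_of N2 i2))),
             (Inl (edge_of N1 o1'), Inr (Inl (edge_of N2 i2')))} :: ('e1 + 'e2 + unit) rel"
  have "(x, y) \<in> (?R \<union> ?R\<inverse>)\<^sup>*"
    using assms(3) by (simp add: nn_cls_def)
  then show ?thesis
    by (induction rule: rtrancl_induct) (use assms(1,2) in auto)
qed

lemma verts_M: "verts M = Some ` (Inl ` verts N1 \<union> Inr ` verts N2) \<union> {None}"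
  by (simp add: NN_def)

lemma edges_M: "edges M = cls ` (Inl ` edges N1 \<union> Inr ` Inl ` edges N2 \<union> {Inr (Inr ())})"
  by (simp add: NN_def)

lemma hends_M_iff [simp]:
  "Inl h \<in> hends M \<longleftrightarrow> h \<in> hends N1 - {o1, o1'}"
  "Inr (Inl h') \<in> hends M \<longleftrightarrow> h' \<in> hends N2 - {i2, i2'}"
  "Inr (Inr b) \<in> hends M"
  by (auto simp: NN_def)

lemma att_M [simp]:
  "att M (Inl h) = (if h = r1 then Some None else map_option (\<lambda>x. Some (Inl x)) (att N1 h))"
  "att M (Inr (Inl h')) = (if h' = r2 then Some None else map_option (\<lambda>x. Some (Inr x)) (att N2 h'))"
  "att M (Inr (Inr b)) = (if b then Some None else None)"
  by (simp_all add: NN_def)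

lemma ends_at_M:
  "ends_at M (Some (Inl x)) = Inl ` ends_at N1 x"
  "ends_at M (Some (Inr y)) = Inr ` Inl ` ends_at N2 y"
  "ends_at M None = {Inl r1, Inr (Inl r2), Inr (Inr True)}"
proof -
  have free: "att N1 o1 = None" "att N1 o1' = None" "r1 \<in> hends N1" "att N1 r1 = None"
    "att N2 i2 = None" "att N2 i2' = None" "r2 \<in> hends N2" "att N2 r2 = None"
    "r1 \<notin> {o1, o1'}" "r2 \<notin> {i2, i2'}"
    using ports1 ports2 by (auto simp: semiedges_def)
  have "(h \<in> ends_at M (Some (Inl x)) \<longleftrightarrow> h \<in> Inl ` ends_at N1 x)
    \<and> (h \<in> ends_at M (Some (Inr y)) \<longleftrightarrow> h \<in> Inr ` Inl ` ends_at N2 y)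
    \<and> (h \<in> ends_at M None \<longleftrightarrow> h \<in> {Inl r1, Inr (Inl r2), Inr (Inr True)})" for h
  proof (cases h)
    case (Inl h1)
    then show ?thesis using free by (auto simp: ends_at_def)
  next
    case outer: (Inr h')
    show ?thesis
    proof (cases h')
      case (Inl h2)
      then show ?thesis using outer free by (auto simp: ends_at_def)
    next
      case (Inr b)
      then show ?thesis using outer by (auto simp: ends_at_def)
    qed
  qed
  then show "ends_at M (Some (Inl x)) = Inl ` ends_at N1 x"
    "ends_at M (Some (Inr y)) = Inr ` Inl ` ends_at N2 y"
    "ends_at M None = {Inl r1, Inr (Inl r2), Inr (Inr True)}"
    by (simp_all add: set_eq_iff)
qed

lemma colouring_M_iff:
  "colouring M \<psi> \<longleftrightarrow>
     colouring N1 (\<lambda>e. \<psi> (cls (Inl e))) \<and> colouring N2 (\<lambda>e. \<psi> (cls (Inr (Inl e)))) \<and>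
     \<psi> (cls (Inr (Inr ()))) \<in> KK \<and>
     distinct [\<psi> (cls (Inl (edge_of N1 r1))), \<psi> (cls (Inr (Inl (edge_of N2 r2)))),
       \<psi> (cls (Inr (Inr ())))]"
proof -
  let ?proper = "\<lambda>x. \<forall>h1\<in>ends_at M x. \<forall>h2\<in>ends_at M x. h1 \<noteq> h2 \<longrightarrow>
    \<psi> (edge_of M h1) \<noteq> \<psi> (edge_of M h2)"
  have edges: "(\<forall>e\<in>edges M. \<psi> e \<in> KK) \<longleftrightarrow> (\<forall>e\<in>edges N1. \<psi> (cls (Inl e)) \<in> KK)
      \<and> (\<forall>e\<in>edges N2. \<psi> (cls (Inr (Inl e))) \<in> KK) \<and> \<psi> (cls (Inr (Inr ()))) \<in> KK"
    by (auto simp: edges_M)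
  have verts: "(\<forall>x\<in>verts M. ?proper x) \<longleftrightarrow>
      (\<forall>x\<in>verts N1. ?proper (Some (Inl x))) \<and> (\<forall>x\<in>verts N2. ?proper (Some (Inr x)))
      \<and> ?proper None"
    unfolding verts_M by blast
  have "?proper (Some (Inl x)) \<longleftrightarrow> (\<forall>h1\<in>ends_at N1 x. \<forall>h2\<in>ends_at N1 x. h1 \<noteq> h2 \<longrightarrow>
      \<psi> (cls (Inl (edge_of N1 h1))) \<noteq> \<psi> (cls (Inl (edge_of N1 h2))))" for x
    by (auto simp: ends_at_M)
  moreover have "?proper (Some (Inr x)) \<longleftrightarrow> (\<forall>h1\<in>ends_at N2 x. \<forall>h2\<in>ends_at N2 x. h1 \<noteq> h2 \<longrightarrow>
      \<psi> (cls (Inr (Inl (edge_of N2 h1)))) \<noteq> \<psi> (cls (Inr (Inl (edge_of N2 h2)))))" for x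
    by (auto simp: ends_at_M)
  moreover have "?proper None \<longleftrightarrow> distinct [\<psi> (cls (Inl (edge_of N1 r1))),
      \<psi> (cls (Inr (Inl (edge_of N2 r2)))), \<psi> (cls (Inr (Inr ())))]"
    by (auto simp: ends_at_M)
  ultimately show ?thesis
    unfolding colouring_def edges verts by auto
qed

lemma colouring_M_glue:
  assumes col1: "colouring N1 \<phi>1" and col2: "colouring N2 \<phi>2"
    and junction: "\<phi>1 (edge_of N1 o1) = \<phi>2 (edge_of N2 i2)" "\<phi>1 (edge_of N1 o1') = \<phi>2 (edge_of N2 i2')"
    and new: "e \<in> KK" "distinct [\<phi>1 (edge_of N1 r1), \<phi>2 (edge_of N2 r2), e]"
  obtains \<psi> where "colouring M \<psi>"
    "\<And>x. \<psi> (cls (Inl x)) = \<phi>1 x" "\<And>y. \<psi> (cls (Inr (Inl y))) = \<phi>2 y" "\<psi> (cls (Inr (Inr ()))) = e"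
proof -
  define c :: "'e1 + 'e2 + unit \<Rightarrow> colour" where "c = case_sum \<phi>1 (case_sum \<phi>2 (\<lambda>_. e))"
  \<comment> \<open>An edge of M is a class of old edges and c is constant on classes, so any
    representative may be used.\<close>
  define \<psi> where "\<psi> S = c (SOME z. z \<in> S)" for S
  have \<psi>_cls: "\<psi> (cls z) = c z" for z
  proof -
    have "(SOME y. y \<in> cls z) \<in> cls z"
      using in_cls_self by (rule someI)
    then show ?thesis
      unfolding \<psi>_def using constant_on_cls[of c] junction by (simp add: c_def)
  qed
  then have "\<psi> (cls (Inl x)) = \<phi>1 x" "\<psi> (cls (Inr (Inl y))) = \<phi>2 y" "\<psi> (cls (Inr (Inr ()))) = e"
    for x y
    by (simp_all add: c_def)
  moreover from calculation have "colouring M \<psi>"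
    using col1 col2 new by (simp add: colouring_M_iff)
  ultimately show thesis
    using that by blast
qed

lemma boundary_colourings_M_subset:
  assumes "boundary_colourings N1 i1 i1' o1 o1' r1 \<subseteq> negator_tuples"
    and "boundary_colourings N2 i2 i2' o2 o2' r2 \<subseteq> negator_tuples"
  shows "boundary_colourings M (Inl i1) (Inl i1') (Inr (Inl o2)) (Inr (Inl o2')) (Inr (Inr False))
    \<subseteq> {(x, x', y, y', z). x \<noteq> x' \<and> y \<noteq> y' \<and> x + x' + y + y' + z = 0}"
proof
  fix t
  assume "t \<in> boundary_colourings M (Inl i1) (Inl i1') (Inr (Inl o2)) (Inr (Inl o2')) (Inr (Inr False))"
  then obtain \<psi> where col: "colouring M \<psi>" and t: "t = (\<psi> (cls (Inl (edge_of N1 i1))),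
      \<psi> (cls (Inl (edge_of N1 i1'))), \<psi> (cls (Inr (Inl (edge_of N2 o2)))),
      \<psi> (cls (Inr (Inl (edge_of N2 o2')))), \<psi> (cls (Inr (Inr ()))))"
    by (auto simp: boundary_colourings_def)
  define \<phi>1 where "\<phi>1 x = \<psi> (cls (Inl x))" for x
  define \<phi>2 where "\<phi>2 y = \<psi> (cls (Inr (Inl y)))" for y
  have col1: "colouring N1 \<phi>1" and col2: "colouring N2 \<phi>2" and new: "\<psi> (cls (Inr (Inr ()))) \<in> KK"
    and distinct: "distinct [\<phi>1 (edge_of N1 r1), \<phi>2 (edge_of N2 r2), \<psi> (cls (Inr (Inr ())))]"
    using col unfolding colouring_M_iff \<phi>1_def \<phi>2_def by blast+
  let ?f1 = "\<lambda>h. \<phi>1 (edge_of N1 h)" and ?f2 = "\<lambda>h. \<phi>2 (edge_of N2 h)"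
  have "(?f1 i1, ?f1 i1', ?f1 o1, ?f1 o1', ?f1 r1) \<in> negator_tuples"
    using assms(1) col1 unfolding boundary_colourings_def by blast
  then have neg1: "?f1 i1 = ?f1 i1' \<or> ?f1 o1 = ?f1 o1'"
    and sum1: "?f1 i1 + ?f1 i1' + ?f1 o1 + ?f1 o1' + ?f1 r1 = 0"
    by (simp_all add: negator_tuples_def)
  have "(?f2 i2, ?f2 i2', ?f2 o2, ?f2 o2', ?f2 r2) \<in> negator_tuples"
    using assms(2) col2 unfolding boundary_colourings_def by blast
  then have neg2: "?f2 i2 = ?f2 i2' \<or> ?f2 o2 = ?f2 o2'"
    and sum2: "?f2 i2 + ?f2 i2' + ?f2 o2 + ?f2 o2' + ?f2 r2 = 0"
    by (simp_all add: negator_tuples_def)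
  have junction: "?f1 o1 = ?f2 i2" "?f1 o1' = ?f2 i2'"
    by (simp_all add: \<phi>1_def \<phi>2_def cls_junction)
  have sum2': "?f1 o1 + ?f1 o1' + ?f2 o2 + ?f2 o2' + ?f2 r2 = 0"
    and neg2': "?f1 o1 = ?f1 o1' \<or> ?f2 o2 = ?f2 o2'"
    using sum2 neg2 unfolding junction .
  have KK: "?f1 r1 \<in> KK" "?f2 r2 \<in> KK"
    using colouring_edge_of_in_KK[OF cubic1 col1] colouring_edge_of_in_KK[OF cubic2 col2]
      ports1 ports2 by (auto simp: semiedges_def)
  from negator_chain_colours[OF sum1 sum2' neg1 neg2' KK new distinct]
  show "t \<in> {(x, x', y, y', z). x \<noteq> x' \<and> y \<noteq> y' \<and> x + x' + y + y' + z = 0}"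
    unfolding t by (simp add: \<phi>1_def \<phi>2_def)
qed

lemma boundary_colourings_M_glue:
  assumes "(x, x', y, y, s) \<in> boundary_colourings N1 i1 i1' o1 o1' r1"
    and "(y, y, z, z', t) \<in> boundary_colourings N2 i2 i2' o2 o2' r2"
    and "e \<in> KK" "distinct [s, t, e]"
  shows "(x, x', z, z', e)
    \<in> boundary_colourings M (Inl i1) (Inl i1') (Inr (Inl o2)) (Inr (Inl o2')) (Inr (Inr False))"
proof -
  obtain \<phi>1 where col1: "colouring N1 \<phi>1" and \<phi>1: "(x, x', y, y, s) = (\<phi>1 (edge_of N1 i1),
      \<phi>1 (edge_of N1 i1'), \<phi>1 (edge_of N1 o1), \<phi>1 (edge_of N1 o1'), \<phi>1 (edge_of N1 r1))"
    using assms(1) by (auto simp: boundary_colourings_def)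
  obtain \<phi>2 where col2: "colouring N2 \<phi>2" and \<phi>2: "(y, y, z, z', t) = (\<phi>2 (edge_of N2 i2),
      \<phi>2 (edge_of N2 i2'), \<phi>2 (edge_of N2 o2), \<phi>2 (edge_of N2 o2'), \<phi>2 (edge_of N2 r2))"
    using assms(2) by (auto simp: boundary_colourings_def)
  have "\<phi>1 (edge_of N1 o1) = \<phi>2 (edge_of N2 i2)" "\<phi>1 (edge_of N1 o1') = \<phi>2 (edge_of N2 i2')"
    "distinct [\<phi>1 (edge_of N1 r1), \<phi>2 (edge_of N2 r2), e]"
    using \<phi>1 \<phi>2 assms(4) by auto
  then obtain \<psi> where col: "colouring M \<psi>" and \<psi>: "\<And>x. \<psi> (cls (Inl x)) = \<phi>1 x"
    "\<And>y. \<psi> (cls (Inr (Inl y))) = \<phi>2 y" "\<psi> (cls (Inr (Inr ()))) = e"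
    using colouring_M_glue[OF col1 col2 _ _ assms(3)] by blast
  have "(x, x', z, z', e) = (\<psi> (edge_of M (Inl i1)), \<psi> (edge_of M (Inl i1')),
      \<psi> (edge_of M (Inr (Inl o2))), \<psi> (edge_of M (Inr (Inl o2'))), \<psi> (edge_of M (Inr (Inr False))))"
    using \<phi>1 \<phi>2 by (simp add: \<psi>)
  with col show ?thesis
    unfolding boundary_colourings_def by blast
qed

lemma boundary_colourings_M_perfect:
  assumes perfect: "perfect_neg N1 i1 i1' o1 o1' r1" "perfect_neg N2 i2 i2' o2 o2' r2"
    and KK: "a \<in> KK" "b \<in> KK" "c \<in> KK" "d \<in> KK" "e \<in> KK"
    and "a \<noteq> b" "c \<noteq> d" "a + b + c + d + e = 0"
  shows "(a, b, c, d, e)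
    \<in> boundary_colourings M (Inl i1) (Inl i1') (Inr (Inl o2)) (Inr (Inl o2')) (Inr (Inr False))"
proof -
  have "(a, b, a, a, a + b) \<in> {(a, b, x, x, a + b) | x a b. x \<in> KK \<and> a \<in> KK \<and> b \<in> KK \<and> a \<noteq> b}"
    using KK \<open>a \<noteq> b\<close> by blast
  then have N1: "(a, b, a, a, a + b) \<in> boundary_colourings N1 i1 i1' o1 o1' r1"
    unfolding perfect(1)[unfolded perfect_neg_iff_boundary_colourings] by (rule UnI2)
  have "(a, a, c, d, c + d) \<in> {(x, x, a, b, a + b) | x a b. x \<in> KK \<and> a \<in> KK \<and> b \<in> KK \<and> a \<noteq> b}"
    using KK \<open>c \<noteq> d\<close> by blast
  then have N2: "(a, a, c, d, c + d) \<in> boundary_colourings N2 i2 i2' o2 o2' r2"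
    unfolding perfect(2)[unfolded perfect_neg_iff_boundary_colourings] by (rule UnI1)
  have "(a + b) + (c + d) + e = 0"
    using \<open>a + b + c + d + e = 0\<close> by (simp add: add.assoc)
  then have "distinct [a + b, c + d, e]"
    using KK_sum3_eq_0_iff[OF KK_add(1)[OF KK(1,2) \<open>a \<noteq> b\<close>] KK_add(1)[OF KK(3,4) \<open>c \<noteq> d\<close>] KK(5)]
    by simp
  then show ?thesis
    by (rule boundary_colourings_M_glue[OF N1 N2 KK(5)])
qed

end

lemma nn_junction_Neg:
  assumes "neg_construction G1 u1 w1 v1 e11 e12 i1 i1' o1 o1' r1"
    and "neg_construction G2 u2 w2 v2 e21 e22 i2 i2' o2 o2' r2"
  shows "nn_junction (Neg G1 u1 w1 v1 e11 e12) o1 o1' r1 (Neg G2 u2 w2 v2 e21 e22) i2 i2' r2"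
  using neg_construction.cubic_N[OF assms(1)] neg_construction.cubic_N[OF assms(2)]
    neg_construction.semiedges_N[OF assms(1)] neg_construction.semiedges_N[OF assms(2)]
    neg_construction.ports_distinct[OF assms(1)] neg_construction.ports_distinct[OF assms(2)]
  by unfold_locales auto

theorem mainTheorem2:
  fixes G1 :: "('v1, 'h1, 'e1) multipole" and G2 :: "('v2, 'h2, 'e2) multipole"
    and u1 w1 v1 :: 'v1 and e11 e12 :: 'e1 and i1 i1' o1 o1' r1 :: 'h1
    and u2 w2 v2 :: 'v2 and e21 e22 :: 'e2 and i2 i2' o2 o2' r2 :: 'h2
  assumes "snark G1" and "path2 G1 u1 w1 v1 e11 e12"
    and "neg_ports G1 u1 w1 v1 e11 e12 i1 i1' o1 o1' r1"
    and "snark G2" and "path2 G2 u2 w2 v2 e21 e22"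
    and "neg_ports G2 u2 w2 v2 e21 e22 i2 i2' o2 o2' r2"
  defines "N1 \<equiv> Neg G1 u1 w1 v1 e11 e12" and "N2 \<equiv> Neg G2 u2 w2 v2 e21 e22"
  defines "M \<equiv> NN N1 o1 o1' r1 N2 i2 i2' r2"
  shows "(\<forall>\<phi>. colouring M \<phi> \<longrightarrow>
            \<phi> (edge_of M (Inl i1)) \<noteq> \<phi> (edge_of M (Inl i1')) \<and>
            \<phi> (edge_of M (Inr (Inl o2))) \<noteq> \<phi> (edge_of M (Inr (Inl o2'))) \<and>
            \<phi> (edge_of M (Inl i1)) + \<phi> (edge_of M (Inl i1')) + \<phi> (edge_of M (Inr (Inl o2)))
              + \<phi> (edge_of M (Inr (Inl o2'))) + \<phi> (edge_of M (Inr (Inr False))) = 0)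
       \<and> (perfect_neg N1 i1 i1' o1 o1' r1 \<and> perfect_neg N2 i2 i2' o2 o2' r2 \<longrightarrow>
            (\<forall>a \<in> KK. \<forall>b \<in> KK. \<forall>c \<in> KK. \<forall>d \<in> KK. \<forall>e \<in> KK.
               a \<noteq> b \<and> c \<noteq> d \<and> a + b + c + d + e = 0 \<longrightarrow>
               (\<exists>\<phi>. colouring M \<phi> \<and>
                  \<phi> (edge_of M (Inl i1)) = a \<and> \<phi> (edge_of M (Inl i1')) = b \<and>
                  \<phi> (edge_of M (Inr (Inl o2))) = c \<and> \<phi> (edge_of M (Inr (Inl o2'))) = d \<and>
                  \<phi> (edge_of M (Inr (Inr False))) = e)))"
proof -
  have G1: "neg_construction G1 u1 w1 v1 e11 e12 i1 i1' o1 o1' r1"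
    and G2: "neg_construction G2 u2 w2 v2 e21 e22 i2 i2' o2 o2' r2"
    using assms(1-6) by (simp_all add: neg_construction_def snark_def)
  interpret J: nn_junction N1 o1 o1' r1 N2 i2 i2' r2
    unfolding N1_def N2_def using G1 G2 by (rule nn_junction_Neg)
  have negators: "boundary_colourings N1 i1 i1' o1 o1' r1 \<subseteq> negator_tuples"
    "boundary_colourings N2 i2 i2' o2 o2' r2 \<subseteq> negator_tuples"
    using neg_construction.boundary_colourings_N[OF G1] neg_construction.boundary_colourings_N[OF G2]
      assms(1,4) unfolding N1_def N2_def snark_def by blast+
  have "\<forall>\<phi>. colouring M \<phi> \<longrightarrow> (\<phi> (edge_of M (Inl i1)), \<phi> (edge_of M (Inl i1')),
      \<phi> (edge_of M (Inr (Inl o2))), \<phi> (edge_of M (Inr (Inl o2'))), \<phi> (edge_of M (Inr (Inr False))))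
      \<in> {(x, x', y, y', z). x \<noteq> x' \<and> y \<noteq> y' \<and> x + x' + y + y' + z = 0}"
    using J.boundary_colourings_M_subset[OF negators] unfolding M_def boundary_colourings_def by blast
  moreover have "\<exists>\<phi>. colouring M \<phi> \<and> \<phi> (edge_of M (Inl i1)) = a \<and> \<phi> (edge_of M (Inl i1')) = b \<and>
      \<phi> (edge_of M (Inr (Inl o2))) = c \<and> \<phi> (edge_of M (Inr (Inl o2'))) = d \<and>
      \<phi> (edge_of M (Inr (Inr False))) = e"
    if "perfect_neg N1 i1 i1' o1 o1' r1" "perfect_neg N2 i2 i2' o2 o2' r2"
      "a \<in> KK" "b \<in> KK" "c \<in> KK" "d \<in> KK" "e \<in> KK" "a \<noteq> b" "c \<noteq> d" "a + b + c + d + e = 0"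
    for a b c d e
    using J.boundary_colourings_M_perfect[OF that] unfolding M_def boundary_colourings_def by auto
  ultimately show ?thesis
    by auto
qed

end
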